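(* Let $\mathcal{F}$ be a free filter on $\omega$ and let $\kappa$ be a cardinal with $\omega\le\kappa\le\mathfrak{c}$. Then $C_p(X_{\mathcal{F},\kappa})$ is homeomorphic to $(C_\mathcal{F})^\kappa$ (with the product topology).
   Context: A filter on $\omega$ is free if it contains all cofinite sets. $\mathfrak{c}=2^{\aleph_0}$. $X_{\mathcal{F},\kappa}$ is the space $(\kappa\times\omega)\cup\{\infty\}$ in which every point of $\kappa\times\omega$ is isolated and the neighborhoods of $\infty$ are the sets $\{\infty\}\cup\bigcup\{\{\alpha\}\times A_\alpha:\alpha<\kappa\}$ with $A_\alpha\in\mathcal{F}$ for all $\alpha$. $C_p(X)$ is the space of continuous real-valued functions on $X$ with the pointwise convergence topology. $C_\mathcal{F}=\{f\in(-1,1)^\omega:\forall m\in\omega\ \{n\in\omega:|f(n)|<2^{-m}\}\in\mathcal{F}\}$, a subspace of $[-1,1]^\omega$ with the product topology. *)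

theory Defs
  imports "HOL-Analysis.Analysis"
begin

text \<open>The space X_{F,kappa}: points are (kappa x omega) plus a point infinity,
  represented as the option type over 'k \<times> nat with None = infinity.\<close>
definition Xtop :: "nat filter \<Rightarrow> ('k \<times> nat) option topology" where
  "Xtop F = topology (\<lambda>U. None \<in> U \<longrightarrow> (\<forall>\<alpha>. \<forall>\<^sub>F n in F. Some (\<alpha>, n) \<in> U))"

definition Cp :: "'a topology \<Rightarrow> ('a \<Rightarrow> real) topology" where
  "Cp X = subtopology (product_topology (\<lambda>_. euclideanreal) (topspace X))
            {f \<in> extensional (topspace X). continuous_map X euclideanreal f}"

definition CF_set :: "nat filter \<Rightarrow> (nat \<Rightarrow> real) set" where
  "CF_set F = {f. (\<forall>n. f n \<in> {-1<..<1}) \<and>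
                  (\<forall>m::nat. \<forall>\<^sub>F n in F. \<bar>f n\<bar> < (1/2) ^ m)}"

definition CFtop :: "nat filter \<Rightarrow> (nat \<Rightarrow> real) topology" where
  "CFtop F = subtopology (product_topology (\<lambda>_. top_of_set {-1..1}) UNIV) (CF_set F)"

end

theory Submission
  imports Defs "HOL-Library.Equipollence"
begin

text \<open>Recording a function f on X_{F,\<kappa>} by its value c = f(\<infinity>) and its increments
  f(\<alpha>,n) - c identifies C_p(X_{F,\<kappa>}) with \<real> \<times> c_F^\<kappa>, where c_F is the space of real
  sequences converging to 0 along F. As F is free, the entries with n = 0 can be changed at
  will, and a Hilbert-hotel shift of these entries along a countable part of \<kappa> absorbs the
  factor \<real>: \<real> \<times> c_F^\<kappa> is homeomorphic to c_F^\<kappa>. Finally x \<mapsto> x/(1+|x|), applied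
  coordinatewise, maps c_F homeomorphically onto C_F.\<close>

lemma openin_Xtop:
  fixes U :: "('k \<times> nat) option set"
  shows "openin (Xtop F) U \<longleftrightarrow> (None \<in> U \<longrightarrow> (\<forall>\<alpha>. \<forall>\<^sub>F n in F. Some (\<alpha>, n) \<in> U))"
proof -
  let ?open = "\<lambda>U::('k \<times> nat) option set. None \<in> U \<longrightarrow> (\<forall>\<alpha>. \<forall>\<^sub>F n in F. Some (\<alpha>, n) \<in> U)"
  have "?open (S \<inter> T)" if "?open S" "?open T" for S T
    using that by (simp add: eventually_conj_iff)
  moreover have "?open (\<Union>\<K>)" if "\<forall>S\<in>\<K>. ?open S" for \<K>
  proof (intro impI allI)
    fix \<alpha>
    assume "None \<in> \<Union>\<K>"
    then obtain S where "S \<in> \<K>" "None \<in> S"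
      by blast
    then have "\<forall>\<^sub>F n in F. Some (\<alpha>, n) \<in> S"
      using that by blast
    then show "\<forall>\<^sub>F n in F. Some (\<alpha>, n) \<in> \<Union>\<K>"
      by (rule eventually_mono) (use \<open>S \<in> \<K>\<close> in blast)
  qed
  ultimately have "istopology ?open"
    unfolding istopology_def by blast
  then show ?thesis
    unfolding Xtop_def by simp
qed

lemma topspace_Xtop [simp]: "topspace (Xtop F) = UNIV"
  using openin_subset[of "Xtop F" UNIV] by (simp add: openin_Xtop top.extremum_unique)

lemma continuous_map_Xtop:
  fixes f :: "('k \<times> nat) option \<Rightarrow> 'a::topological_space"
  shows "continuous_map (Xtop F) euclidean f \<longleftrightarrow> (\<forall>\<alpha>. ((\<lambda>n. f (Some (\<alpha>, n))) \<longlongrightarrow> f None) F)"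
  by (auto simp: continuous_map_def openin_Xtop tendsto_def)

lemma topspace_Cp: "topspace (Cp X) = {f \<in> extensional (topspace X). continuous_map X euclideanreal f}"
  by (auto simp: Cp_def PiE_def)

lemma continuous_map_into_Cp:
  "continuous_map Z (Cp X) h \<longleftrightarrow>
     (\<forall>p\<in>topspace X. continuous_map Z euclideanreal (\<lambda>z. h z p)) \<and> h ` topspace Z \<subseteq> topspace (Cp X)"
  by (auto simp: Cp_def continuous_map_in_subtopology continuous_map_componentwise)

lemma continuous_map_Cp_eval: "p \<in> topspace X \<Longrightarrow> continuous_map (Cp X) euclideanreal (\<lambda>f. f p)"
  unfolding Cp_def by (intro continuous_map_from_subtopology continuous_map_product_projection)

definition c0_topology :: "'a filter \<Rightarrow> ('a \<Rightarrow> real) topology" where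
  "c0_topology F = subtopology (powertop_real UNIV) {g. (g \<longlongrightarrow> 0) F}"

lemma topspace_c0_topology: "topspace (c0_topology F) = {g. (g \<longlongrightarrow> 0) F}"
  by (simp add: c0_topology_def)

lemma continuous_map_into_c0_topology:
  "continuous_map Z (c0_topology F) h \<longleftrightarrow>
     (\<forall>n. continuous_map Z euclideanreal (\<lambda>z. h z n)) \<and> (\<forall>z\<in>topspace Z. (h z \<longlongrightarrow> 0) F)"
  by (auto simp: c0_topology_def continuous_map_in_subtopology continuous_map_componentwise_UNIV)

lemma continuous_map_c0_eval: "continuous_map (c0_topology F) euclideanreal (\<lambda>g. g n)"
  using continuous_map_into_c0_topology[of "c0_topology F" F id] by simp

lemma continuous_map_c0_product_eval:
  "continuous_map (product_topology (\<lambda>_. c0_topology F) UNIV) euclideanreal (\<lambda>G. G \<alpha> n)"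
  using continuous_map_compose[OF continuous_map_product_projection[of \<alpha> UNIV "\<lambda>_. c0_topology F"]
      continuous_map_c0_eval]
  by (simp add: o_def)

lemma continuous_map_snd_c0_product_eval:
  "continuous_map (prod_topology X (product_topology (\<lambda>_. c0_topology F) UNIV)) euclideanreal
     (\<lambda>z. snd z \<alpha> n)"
  using continuous_map_compose[OF continuous_map_snd continuous_map_c0_product_eval]
  by (simp add: o_def)

lemma tendsto_fun_upd_cofinite:
  assumes "F \<le> cofinite"
  shows "(g(x := y) \<longlongrightarrow> l) F \<longleftrightarrow> (g \<longlongrightarrow> l) F"
proof (rule tendsto_cong)
  have "\<forall>\<^sub>F n in cofinite. n \<noteq> x"
    by (simp add: eventually_cofinite)
  then show "\<forall>\<^sub>F n in F. (g(x := y)) n = g n"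
    using filter_leD[OF assms] by (auto elim: eventually_mono)
qed

lemma CF_set_altdef: "CF_set F = {g. (\<forall>n. \<bar>g n\<bar> < 1) \<and> (g \<longlongrightarrow> 0) F}"
proof -
  have "(\<forall>m::nat. \<forall>\<^sub>F n in F. \<bar>g n\<bar> < (1/2) ^ m) \<longleftrightarrow> (g \<longlongrightarrow> 0) F" for g :: "nat \<Rightarrow> real"
  proof
    assume small: "\<forall>m::nat. \<forall>\<^sub>F n in F. \<bar>g n\<bar> < (1/2) ^ m"
    show "(g \<longlongrightarrow> 0) F"
    proof (rule tendstoI)
      fix e :: real
      assume "e > 0"
      then obtain m :: nat where "(1/2) ^ m < e"
        using real_arch_pow_inv[of e "1/2"] by auto
      then show "\<forall>\<^sub>F n in F. dist (g n) 0 < e"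
        using small[rule_format, of m] by (auto elim: eventually_mono)
    qed
  qed (auto dest!: tendstoD[where e="(1/2)^_"])
  then show ?thesis
    unfolding CF_set_def by (auto simp: abs_less_iff)
qed

lemma CF_set_in_cube: "g \<in> CF_set F \<Longrightarrow> g n \<in> {-1..1}"
  unfolding CF_set_def by (auto dest: spec[of _ n])

lemma topspace_CFtop: "topspace (CFtop F) = CF_set F"
proof -
  have "CF_set F \<subseteq> UNIV \<rightarrow>\<^sub>E {-1..1}"
    using CF_set_in_cube by (auto simp: PiE_UNIV_domain)
  then show ?thesis
    unfolding CFtop_def by (simp add: Int_absorb1)
qed

lemma continuous_map_into_CFtop:
  "continuous_map Z (CFtop F) h \<longleftrightarrow>
     (\<forall>n. continuous_map Z euclideanreal (\<lambda>z. h z n)) \<and> h ` topspace Z \<subseteq> CF_set F"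
proof -
  have "(\<lambda>z. h z n) ` topspace Z \<subseteq> {-1..1}" if "h ` topspace Z \<subseteq> CF_set F" for n
    using that CF_set_in_cube by blast
  then show ?thesis
    unfolding CFtop_def continuous_map_in_subtopology continuous_map_componentwise_UNIV by auto
qed

lemma continuous_map_CFtop_eval: "continuous_map (CFtop F) (top_of_set {-1<..<1}) (\<lambda>g. g n)"
  using continuous_map_into_CFtop[of "CFtop F" F id]
  by (auto simp: continuous_map_in_subtopology CF_set_altdef abs_less_iff)

lemma homeomorphic_maps_c0_CFtop:
  "homeomorphic_maps (c0_topology F) (CFtop F) (\<lambda>g n. g n / (1 + \<bar>g n\<bar>)) (\<lambda>g n. g n / (1 - \<bar>g n\<bar>))"
proof -
  let ?shrink = "\<lambda>x::real. x / (1 + \<bar>x\<bar>)" and ?grow = "\<lambda>y::real. y / (1 - \<bar>y\<bar>)"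
  have shrink: "continuous_map euclideanreal euclideanreal ?shrink"
    using continuous_shrink by simp
  have grow: "continuous_map (top_of_set {-1<..<1}) euclideanreal ?grow"
    using continuous_on_real_grow by simp
  have shrink0: "isCont ?shrink 0"
    using continuous_shrink by (simp add: continuous_on_eq_continuous_at)
  have "((\<lambda>n. ?shrink (g n)) \<longlongrightarrow> 0) F" if "(g \<longlongrightarrow> 0) F" for g
    using isCont_tendsto_compose[OF shrink0 that] by simp
  moreover have "\<bar>?shrink x\<bar> < 1" for x
    by (simp add: divide_simps)
  ultimately have to_CF: "continuous_map (c0_topology F) (CFtop F) (\<lambda>g n. ?shrink (g n))"
    using continuous_map_compose[OF continuous_map_c0_eval shrink]
    by (auto simp: continuous_map_into_CFtop CF_set_altdef topspace_c0_topology o_def)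
  have grow0: "isCont ?grow 0"
    using continuous_on_real_grow by (simp add: continuous_on_eq_continuous_at)
  have "((\<lambda>n. ?grow (g n)) \<longlongrightarrow> 0) F" if "(g \<longlongrightarrow> 0) F" for g
    using isCont_tendsto_compose[OF grow0 that] by simp
  then have to_c0: "continuous_map (CFtop F) (c0_topology F) (\<lambda>g n. ?grow (g n))"
    using continuous_map_compose[OF continuous_map_CFtop_eval grow]
    by (auto simp: continuous_map_into_c0_topology topspace_CFtop CF_set_altdef o_def)
  show ?thesis
    unfolding homeomorphic_maps_def
  proof (intro conjI ballI to_CF to_c0 ext)
    show "?grow (?shrink (g n)) = g n" for g :: "nat \<Rightarrow> real" and n
      by (rule real_grow_shrink)
    show "?shrink (?grow (g n)) = g n" if "g \<in> topspace (CFtop F)" for g :: "nat \<Rightarrow> real" and n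
      using that by (intro real_shrink_grow) (simp add: topspace_CFtop CF_set_altdef)
  qed
qed

lemma continuous_map_product_topology_map:
  assumes "\<And>i. i \<in> I \<Longrightarrow> continuous_map (X i) (Y i) (f i)"
  shows "continuous_map (product_topology X I) (product_topology Y I) (\<lambda>x. \<lambda>i\<in>I. f i (x i))"
  unfolding continuous_map_componentwise
proof (intro conjI ballI)
  fix k
  assume "k \<in> I"
  then show "continuous_map (product_topology X I) (Y k) (\<lambda>x. (\<lambda>i\<in>I. f i (x i)) k)"
    using continuous_map_compose[OF continuous_map_product_projection[of k I X] assms]
    by (simp add: o_def)
qed auto

lemma homeomorphic_space_product_topology:
  assumes "\<And>i. i \<in> I \<Longrightarrow> X i homeomorphic_space Y i"
  shows "product_topology X I homeomorphic_space product_topology Y I"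
proof -
  obtain f g where fg: "\<And>i. i \<in> I \<Longrightarrow> homeomorphic_maps (X i) (Y i) (f i) (g i)"
    using assms unfolding homeomorphic_space_def by metis
  have "homeomorphic_maps (product_topology X I) (product_topology Y I)
          (\<lambda>x. \<lambda>i\<in>I. f i (x i)) (\<lambda>y. \<lambda>i\<in>I. g i (y i))"
    unfolding homeomorphic_maps_def
  proof (intro conjI ballI continuous_map_product_topology_map)
    show "continuous_map (X i) (Y i) (f i)" "continuous_map (Y i) (X i) (g i)" if "i \<in> I" for i
      using fg[OF that] by (simp_all add: homeomorphic_maps_def)
    show "(\<lambda>i\<in>I. g i ((\<lambda>i\<in>I. f i (x i)) i)) = x" if "x \<in> topspace (product_topology X I)" for x
      using that fg by (auto simp: homeomorphic_maps_def PiE_iff extensional_def fun_eq_iff)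
    show "(\<lambda>i\<in>I. f i ((\<lambda>i\<in>I. g i (y i)) i)) = y" if "y \<in> topspace (product_topology Y I)" for y
      using that fg by (auto simp: homeomorphic_maps_def PiE_iff extensional_def fun_eq_iff)
  qed
  then show ?thesis
    unfolding homeomorphic_space_def by blast
qed

definition split_at_infinity :: "(('k \<times> nat) option \<Rightarrow> real) \<Rightarrow> real \<times> ('k \<Rightarrow> nat \<Rightarrow> real)" where
  "split_at_infinity f = (f None, \<lambda>\<alpha> n. f (Some (\<alpha>, n)) - f None)"

definition join_at_infinity :: "real \<times> ('k \<Rightarrow> nat \<Rightarrow> real) \<Rightarrow> ('k \<times> nat) option \<Rightarrow> real" where
  "join_at_infinity z p = (case p of None \<Rightarrow> fst z | Some (\<alpha>, n) \<Rightarrow> snd z \<alpha> n + fst z)"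

lemma homeomorphic_maps_split_at_infinity:
  "homeomorphic_maps (Cp (Xtop F))
     (prod_topology euclideanreal (product_topology (\<lambda>_::'k. c0_topology F) UNIV))
     split_at_infinity join_at_infinity"
  unfolding homeomorphic_maps_def
proof (intro conjI ballI)
  show "continuous_map (Cp (Xtop F))
      (prod_topology euclideanreal (product_topology (\<lambda>_::'k. c0_topology F) UNIV)) split_at_infinity"
    by (auto simp: continuous_map_pairwise o_def split_at_infinity_def continuous_map_componentwise_UNIV
        continuous_map_into_c0_topology topspace_Cp continuous_map_Xtop
        intro!: continuous_map_Cp_eval continuous_map_diff LIM_zero)
  have "continuous_map (prod_topology euclideanreal (product_topology (\<lambda>_::'k. c0_topology F) UNIV))
      euclideanreal (\<lambda>z. join_at_infinity z p)" for p
  proof (cases p)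
    case (Some q)
    then show ?thesis
      by (cases q) (simp add: join_at_infinity_def continuous_map_add continuous_map_fst
          continuous_map_snd_c0_product_eval)
  qed (simp add: join_at_infinity_def continuous_map_fst)
  moreover have "((\<lambda>n. g n + c) \<longlongrightarrow> c) F" if "(g \<longlongrightarrow> 0) F" for g :: "nat \<Rightarrow> real" and c
    using tendsto_add[OF that tendsto_const] by simp
  ultimately show "continuous_map (prod_topology euclideanreal (product_topology (\<lambda>_::'k. c0_topology F) UNIV))
      (Cp (Xtop F)) join_at_infinity"
    by (auto simp: continuous_map_into_Cp topspace_Cp continuous_map_Xtop topspace_c0_topology
        join_at_infinity_def PiE_iff)
qed (auto simp: split_at_infinity_def join_at_infinity_def fun_eq_iff split: option.split)

text \<open>With h a bijection from \<kappa> onto \<kappa> - {a}, the 0-th entry of column \<alpha> moves to column h \<alpha>,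
  which frees the 0-th entry of column a for the extra real coordinate.\<close>

definition absorb_coordinate :: "('k \<Rightarrow> 'k) \<Rightarrow> 'k \<Rightarrow> real \<times> ('k \<Rightarrow> nat \<Rightarrow> real) \<Rightarrow> 'k \<Rightarrow> nat \<Rightarrow> real" where
  "absorb_coordinate h a z \<alpha> = (snd z \<alpha>)(0 := if \<alpha> = a then fst z else snd z (inv h \<alpha>) 0)"

definition release_coordinate :: "('k \<Rightarrow> 'k) \<Rightarrow> 'k \<Rightarrow> ('k \<Rightarrow> nat \<Rightarrow> real) \<Rightarrow> real \<times> ('k \<Rightarrow> nat \<Rightarrow> real)" where
  "release_coordinate h a G = (G a 0, \<lambda>\<alpha>. (G \<alpha>)(0 := G (h \<alpha>) 0))"

lemma homeomorphic_maps_absorb_coordinate: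
  assumes "F \<le> cofinite" and hotel: "bij_betw h UNIV (- {a})"
  shows "homeomorphic_maps (prod_topology euclideanreal (product_topology (\<lambda>_::'k. c0_topology F) UNIV))
           (product_topology (\<lambda>_. c0_topology F) UNIV) (absorb_coordinate h a) (release_coordinate h a)"
  unfolding homeomorphic_maps_def
proof (intro conjI ballI)
  let ?c0 = "product_topology (\<lambda>_::'k. c0_topology F) UNIV"
  have "continuous_map (prod_topology euclideanreal ?c0) euclideanreal (\<lambda>z. absorb_coordinate h a z \<alpha> n)"
    for \<alpha> n
    by (cases "n = 0"; cases "\<alpha> = a")
      (simp_all add: absorb_coordinate_def continuous_map_snd_c0_product_eval continuous_map_fst)
  then show "continuous_map (prod_topology euclideanreal ?c0) ?c0 (absorb_coordinate h a)"
    by (auto simp: continuous_map_componentwise_UNIV continuous_map_into_c0_topology topspace_c0_topology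
        absorb_coordinate_def tendsto_fun_upd_cofinite[OF assms(1)])
  have "continuous_map ?c0 euclideanreal (\<lambda>G. ((G \<alpha>)(0 := G (h \<alpha>) 0)) n)" for \<alpha> n
    by (cases "n = 0") (simp_all add: continuous_map_c0_product_eval)
  then show "continuous_map ?c0 (prod_topology euclideanreal ?c0) (release_coordinate h a)"
    by (auto simp: continuous_map_pairwise o_def release_coordinate_def continuous_map_componentwise_UNIV
        continuous_map_into_c0_topology topspace_c0_topology tendsto_fun_upd_cofinite[OF assms(1)]
        continuous_map_c0_product_eval)
  have h_ne: "h \<alpha> \<noteq> a" and inv_h: "inv h (h \<alpha>) = \<alpha>" for \<alpha>
    using hotel by (auto simp: bij_betw_def)
  have h_inv: "h (inv h \<alpha>) = \<alpha>" if "\<alpha> \<noteq> a" for \<alpha>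
    using hotel that by (auto simp: bij_betw_def f_inv_into_f)
  show "release_coordinate h a (absorb_coordinate h a z) = z" for z
    by (simp add: absorb_coordinate_def release_coordinate_def fun_eq_iff prod_eq_iff h_ne inv_h)
  show "absorb_coordinate h a (release_coordinate h a G) = G" for G
    by (simp add: absorb_coordinate_def release_coordinate_def fun_eq_iff h_inv)
qed

lemma infinite_UNIV_bij_betw_Compl_singleton:
  fixes a :: 'a
  assumes "infinite (UNIV :: 'a set)"
  shows "\<exists>h :: 'a \<Rightarrow> 'a. bij_betw h UNIV (- {a})"
proof -
  have "insert a (- {a}) \<approx> - {a}"
    using assms by (intro infinite_insert_eqpoll) auto
  moreover have "insert a (- {a}) = UNIV"
    by auto
  ultimately show ?thesis
    by (simp add: eqpoll_def)
qed

theorem mainTheorem16: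
  fixes F :: "nat filter"
  assumes "F \<noteq> bot"
    and "F \<le> cofinite"
    and "infinite (UNIV :: 'k set)"
    and "\<exists>g :: 'k \<Rightarrow> real. inj g"
  shows "Cp (Xtop F :: ('k \<times> nat) option topology)
           homeomorphic_space product_topology (\<lambda>_::'k. CFtop F) UNIV"
proof -
  fix a :: 'k
  obtain h :: "'k \<Rightarrow> 'k" where hotel: "bij_betw h UNIV (- {a})"
    using infinite_UNIV_bij_betw_Compl_singleton[OF assms(3)] by blast
  have "Cp (Xtop F :: ('k \<times> nat) option topology)
          homeomorphic_space prod_topology euclideanreal (product_topology (\<lambda>_::'k. c0_topology F) UNIV)"
    using homeomorphic_maps_split_at_infinity by (rule homeomorphic_maps_imp_homeomorphic_space)
  also have "\<dots> homeomorphic_space product_topology (\<lambda>_::'k. c0_topology F) UNIV"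
    using homeomorphic_maps_absorb_coordinate[OF assms(2) hotel]
    by (rule homeomorphic_maps_imp_homeomorphic_space)
  also have "\<dots> homeomorphic_space product_topology (\<lambda>_::'k. CFtop F) UNIV"
    using homeomorphic_maps_c0_CFtop
    by (intro homeomorphic_space_product_topology homeomorphic_maps_imp_homeomorphic_space)
  finally show ?thesis .
qed

end
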